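(* Let $n \geq 3$. Assume that $\mu \colon \mathcal{R}^n \to \mathbb{R}^{n\times n}$ is a measurable valuation which is $\mathrm{GL}(n)$-covariant (i.e. $\mu(\phi P) = |\det\phi|\,\phi\,\mu(P)\,\phi^t$ whenever $\phi \in \mathrm{GL}(n)$ and $P, \phi P \in \mathcal{R}^n$) and which vanishes on $\mathcal{Q}^n$. Furthermore, assume that $\mu(P)$ is an antisymmetric matrix for all $P \in \mathcal{R}^n$. Then $\mu$ vanishes on $\mathcal{R}^n$.
   Context: Identify $\mathbb{R}^{n-1}$ with $e_n^\perp \subset \mathbb{R}^n$, and for $x \in \mathbb{R}^{n-1}$ write $(x,1)$ for the vector of $\mathbb{R}^n$ whose first $n-1$ coordinates are $x$ and last coordinate is $1$. Let $\mathcal{P}^{n-1}_o$ be the set of convex polytopes in $\mathbb{R}^{n-1}\cong e_n^\perp$ containing the origin in their (relative) interiors. For $B \in \mathcal{P}^{n-1}_o$, $c,d>0$ and $x,y \in \mathbb{R}^{n-1}$, say that $B,c,d,x,y$ form a double pyramid if $\mathrm{conv}(B \cup \{-c(x,1), d(y,1)\}) \cap e_n^\perp = B$. $\mathcal{R}^n$ is the set of all such polytopes $\mathrm{conv}(B\cup\{-c(x,1),d(y,1)\})$, and $\mathcal{Q}^n \subseteq \mathcal{R}^n$ is the subset with $x=y=0$. $\mathcal{R}^n$ carries the Hausdorff metric topology and "measurable" refers to Borel $\sigma$-algebras. A map $\mu$ on a family $\mathcal{S}$ of sets is a valuation if $\mu(K \cup L) + \mu(K \cap L) = \mu(K) + \mu(L)$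 whenever $K, L, K\cup L, K \cap L \in \mathcal{S}$. *)

theory Defs
  imports "HOL-Analysis.Analysis"
begin

text \<open>The distinguished last coordinate e_n is represented by an index k of the finite
  index type 'n; R^{n-1} is identified with the hyperplane e_k^perp.\<close>

definition hplane :: "'n::finite \<Rightarrow> (real^'n) set" where
  "hplane k = {v. v $ k = 0}"

text \<open>(x,1): the vector with first n-1 coordinates x and last coordinate 1.\<close>
definition lift1 :: "'n::finite \<Rightarrow> real^'n \<Rightarrow> real^'n" where
  "lift1 k x = x + axis k 1"

definition Po :: "'n::finite \<Rightarrow> (real^'n) set set" where
  "Po k = {B. polytope B \<and> B \<subseteq> hplane k \<and> aff_dim B = int CARD('n) - 1
              \<and> 0 \<in> rel_interior B}"

definition double_pyramid ::
  "'n::finite \<Rightarrow> (real^'n) set \<Rightarrow> real \<Rightarrow> real \<Rightarrow> real^'n \<Rightarrow> real^'n \<Rightarrow> bool" where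
  "double_pyramid k B c d x y \<longleftrightarrow>
     B \<in> Po k \<and> c > 0 \<and> d > 0 \<and> x \<in> hplane k \<and> y \<in> hplane k \<and>
     convex hull (B \<union> {- (c *\<^sub>R lift1 k x), d *\<^sub>R lift1 k y}) \<inter> hplane k = B"

definition Rn :: "'n::finite \<Rightarrow> (real^'n) set set" where
  "Rn k = {convex hull (B \<union> {- (c *\<^sub>R lift1 k x), d *\<^sub>R lift1 k y}) | B c d x y.
             double_pyramid k B c d x y}"

definition Qn :: "'n::finite \<Rightarrow> (real^'n) set set" where
  "Qn k = {convex hull (B \<union> {- (c *\<^sub>R lift1 k 0), d *\<^sub>R lift1 k 0}) | B c d.
             double_pyramid k B c d 0 0}"

definition hausdorff_dist :: "'a::metric_space set \<Rightarrow> 'a set \<Rightarrow> real" where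
  "hausdorff_dist S T = max (SUP x\<in>S. setdist {x} T) (SUP y\<in>T. setdist {y} S)"

definition hausdorff_borel :: "'a::metric_space set set \<Rightarrow> 'a set measure" where
  "hausdorff_borel F = sigma F {U. openin (Metric_space.mtopology F hausdorff_dist) U}"

definition valuation_on :: "'a set set \<Rightarrow> ('a set \<Rightarrow> 'b::ab_group_add) \<Rightarrow> bool" where
  "valuation_on S \<mu> \<longleftrightarrow> (\<forall>K L. K \<in> S \<longrightarrow> L \<in> S \<longrightarrow> K \<union> L \<in> S \<longrightarrow> K \<inter> L \<in> S \<longrightarrow>
       \<mu> (K \<union> L) + \<mu> (K \<inter> L) = \<mu> K + \<mu> L)"

definition GL_covariant_on ::
  "(real^'n::finite) set set \<Rightarrow> ((real^'n) set \<Rightarrow> real^'n^'n) \<Rightarrow> bool" where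
  "GL_covariant_on S \<mu> \<longleftrightarrow> (\<forall>\<phi>::real^'n^'n. \<forall>P. invertible \<phi> \<longrightarrow> P \<in> S \<longrightarrow>
       (\<lambda>v. \<phi> *v v) ` P \<in> S \<longrightarrow>
       \<mu> ((\<lambda>v. \<phi> *v v) ` P) = \<bar>det \<phi>\<bar> *\<^sub>R (\<phi> ** \<mu> P ** transpose \<phi>))"

end

theory Submission
  imports Defs
begin

text \<open>Every \<open>P \<in> \<R>\<^sup>n\<close> is the image, under a shear fixing \<open>e\<^sub>n\<^sup>\<bottom>\<close>, of a double pyramid
  \<open>conv (B \<union> {-c e\<^sub>n, d (2u + e\<^sub>n)})\<close>, so by covariance it suffices to show that its value \<open>M\<close>
  vanishes. Cutting and regluing double pyramids along their common base \<open>B\<close>, the valuation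
  property and the vanishing on \<open>\<Q>\<^sup>n\<close> show that \<open>\<mu>\<close> of a double pyramid with lower apex on the
  \<open>e\<^sub>n\<close>-axis does not depend on the heights \<open>c, d\<close>; one more exchange of apexes gives
  \<open>M = G + |det S| S G S\<^sup>t\<close>, where \<open>S\<close> is the shear by \<open>u\<close> and \<open>G\<close> the value of
  \<open>conv (B \<union> {-2c e\<^sub>n, 2d (u + e\<^sub>n)})\<close>. This pyramid is the image of the first one under the map
  \<open>D\<close> doubling the \<open>n\<close>-th coordinate, hence \<open>G = 2 D M D\<^sup>t\<close>. For antisymmetric \<open>M\<close> and \<open>G\<close> these
  two relations force first the \<open>n\<close>-th column and then all entries of \<open>M\<close> to vanish.\<close>

lemma mem_hplane [simp]: "v \<in> hplane k \<longleftrightarrow> v $ k = 0"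
  by (simp add: hplane_def)

lemma lift1_component [simp]: "lift1 k x $ i = x $ i + (if i = k then 1 else 0)"
  by (simp add: lift1_def axis_def)

lemma Po_D:
  assumes "B \<in> Po k"
  shows "convex B" "0 \<in> B" "B \<subseteq> hplane k"
  using assms by (auto simp: Po_def polytope_imp_convex dest: rel_interior_subset[THEN subsetD])

lemma affine_hull_Po:
  fixes k :: "'n::finite"
  assumes B: "B \<in> Po k"
  shows "affine hull B = hplane k"
proof -
  have hyperplane: "hplane k = {x. axis k 1 \<bullet> x = 0}"
    by (auto simp: cart_eq_inner_axis inner_commute)
  have "affine (hplane k)"
    unfolding hyperplane by (rule affine_hyperplane)
  moreover have "affine hull B \<subseteq> hplane k"
    using Po_D(3)[OF B] \<open>affine (hplane k)\<close> by (simp add: hull_minimal)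
  moreover have "aff_dim (hplane k) = aff_dim (affine hull B)"
    using B unfolding hyperplane by (simp add: aff_dim_hyperplane Po_def)
  ultimately show ?thesis
    using affine_dim_equal[of "affine hull B" "hplane k"] Po_D(2)[OF B] by (auto intro: hull_inc)
qed

lemma Po_ray_meets:
  assumes B: "B \<in> Po k" and v: "v \<in> hplane k"
  obtains r where "r > 0" "r *\<^sub>R v \<in> B"
proof -
  have "- v \<in> affine hull B" using v affine_hull_Po[OF B] by simp
  moreover have "0 \<in> rel_interior B" using B by (simp add: Po_def)
  ultimately obtain e where "e > 1" "(1 - e) *\<^sub>R (- v) + e *\<^sub>R 0 \<in> B"
    using convex_rel_interior_if2[OF Po_D(1)[OF B]] by blast
  then show ?thesis by (intro that[of "e - 1"]) (auto simp: algebra_simps)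
qed

lemma convex_hull_insert_elim:
  fixes B :: "'a::real_vector set"
  assumes "B \<noteq> {}" "z \<in> convex hull (insert a B)"
  obtains s w where "0 \<le> s" "s \<le> 1" "w \<in> convex hull B" "z = s *\<^sub>R a + (1 - s) *\<^sub>R w"
proof -
  obtain u v w where "0 \<le> u" "0 \<le> v" "u + v = 1" "w \<in> convex hull B" "z = u *\<^sub>R a + v *\<^sub>R w"
    using assms unfolding convex_hull_insert[OF assms(1)] by blast
  then show ?thesis by (intro that[of u w]) auto
qed

lemma convex_hull_insert_segment_mem:
  assumes "w \<in> B" "0 \<le> s" "s \<le> 1"
  shows "s *\<^sub>R a + (1 - s) *\<^sub>R w \<in> convex hull (insert a B)"
  using assms by (intro convexD convex_convex_hull) (auto intro: hull_inc)

lemma convex_scaleR_mem: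
  assumes "convex S" "0 \<in> S" "x \<in> S" "0 \<le> t" "t \<le> 1"
  shows "t *\<^sub>R x \<in> S"
  using convexD[OF assms(1,3,2), of t "1 - t"] assms(4,5) by simp

lemma convex_hull_3_split:
  fixes a b w :: "'a::real_vector"
  assumes t: "0 < t" "t < 1" and coeffs: "0 \<le> \<alpha>" "0 \<le> \<beta>" "0 \<le> \<gamma>" "\<alpha> + \<beta> + \<gamma> = 1"
  defines "p \<equiv> (1 - t) *\<^sub>R a + t *\<^sub>R b"
  shows "\<alpha> *\<^sub>R a + \<beta> *\<^sub>R b + \<gamma> *\<^sub>R w \<in> convex hull {a, p, w} \<union> convex hull {b, p, w}"
proof (cases "\<beta> * (1 - t) \<le> \<alpha> * t")
  case True
  have "(\<beta> / t) *\<^sub>R p = (\<beta> * (1 - t) / t) *\<^sub>R a + \<beta> *\<^sub>R b"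
    using t by (simp add: p_def scaleR_add_right)
  then have "\<alpha> *\<^sub>R a + \<beta> *\<^sub>R b + \<gamma> *\<^sub>R w = (\<alpha> - \<beta> * (1 - t) / t) *\<^sub>R a + (\<beta> / t) *\<^sub>R p + \<gamma> *\<^sub>R w"
    by (simp add: algebra_simps)
  moreover have "\<beta> / t - \<beta> * (1 - t) / t = \<beta>"
    using t by (simp add: field_simps)
  then have "(\<alpha> - \<beta> * (1 - t) / t) + \<beta> / t + \<gamma> = 1"
    using coeffs by linarith
  moreover have "0 \<le> \<alpha> - \<beta> * (1 - t) / t"
    using True t by (simp add: field_simps)
  ultimately have "\<alpha> *\<^sub>R a + \<beta> *\<^sub>R b + \<gamma> *\<^sub>R w \<in> convex hull {a, p, w}"
    unfolding convex_hull_3 using t coeffs by fastforce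
  then show ?thesis by blast
next
  case False
  have "(\<alpha> / (1 - t)) *\<^sub>R p = \<alpha> *\<^sub>R a + (\<alpha> * t / (1 - t)) *\<^sub>R b"
    using t by (simp add: p_def scaleR_add_right)
  then have "\<alpha> *\<^sub>R a + \<beta> *\<^sub>R b + \<gamma> *\<^sub>R w = (\<beta> - \<alpha> * t / (1 - t)) *\<^sub>R b + (\<alpha> / (1 - t)) *\<^sub>R p + \<gamma> *\<^sub>R w"
    by (simp add: algebra_simps)
  moreover have "\<alpha> / (1 - t) - \<alpha> * t / (1 - t) = \<alpha>"
  proof -
    have "\<alpha> - \<alpha> * t = \<alpha> * (1 - t)" by (simp add: algebra_simps)
    then show ?thesis using t by (simp add: diff_divide_distrib[symmetric])
  qed
  then have "(\<beta> - \<alpha> * t / (1 - t)) + \<alpha> / (1 - t) + \<gamma> = 1"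
    using coeffs by linarith
  moreover have "0 \<le> \<beta> - \<alpha> * t / (1 - t)"
    using False t by (simp add: field_simps)
  ultimately have "\<alpha> *\<^sub>R a + \<beta> *\<^sub>R b + \<gamma> *\<^sub>R w \<in> convex hull {b, p, w}"
    unfolding convex_hull_3 using t coeffs by fastforce
  then show ?thesis by blast
qed

lemma convex_hull_insert2_split:
  fixes a b :: "'a::real_vector"
  assumes B: "convex B" "B \<noteq> {}" and t: "0 < t" "t < 1"
    and p: "(1 - t) *\<^sub>R a + t *\<^sub>R b \<in> B"
  shows "convex hull (B \<union> {a, b}) = convex hull (insert a B) \<union> convex hull (insert b B)"
proof
  show "convex hull (insert a B) \<union> convex hull (insert b B) \<subseteq> convex hull (B \<union> {a, b})"
    by (intro Un_least hull_mono) auto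
  show "convex hull (B \<union> {a, b}) \<subseteq> convex hull (insert a B) \<union> convex hull (insert b B)"
  proof
    fix q assume "q \<in> convex hull (B \<union> {a, b})"
    then have "q \<in> convex hull (insert a (insert b B))" by (simp add: insert_commute)
    then obtain s v where s: "0 \<le> s" "s \<le> 1" "v \<in> convex hull (insert b B)"
        and q: "q = s *\<^sub>R a + (1 - s) *\<^sub>R v"
      by (rule convex_hull_insert_elim[OF insert_not_empty])
    obtain s' w where s': "0 \<le> s'" "s' \<le> 1" "w \<in> B" and v: "v = s' *\<^sub>R b + (1 - s') *\<^sub>R w"
      using convex_hull_insert_elim[OF B(2) s(3)] convex_hull_eq[THEN iffD2, OF B(1)] by metis
    have "q = s *\<^sub>R a + ((1 - s) * s') *\<^sub>R b + ((1 - s) * (1 - s')) *\<^sub>R w"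
      unfolding q v by (simp add: scaleR_add_right)
    also have "\<dots> \<in> convex hull {a, (1 - t) *\<^sub>R a + t *\<^sub>R b, w} \<union>
                     convex hull {b, (1 - t) *\<^sub>R a + t *\<^sub>R b, w}"
      using s s' by (intro convex_hull_3_split t mult_nonneg_nonneg) (auto simp: algebra_simps)
    also have "\<dots> \<subseteq> convex hull (insert a B) \<union> convex hull (insert b B)"
      using p \<open>w \<in> B\<close> by (intro Un_mono hull_mono) auto
    finally show "q \<in> convex hull (insert a B) \<union> convex hull (insert b B)" .
  qed
qed

definition bipyramid ::
  "'n::finite \<Rightarrow> (real^'n) set \<Rightarrow> real \<Rightarrow> real \<Rightarrow> real^'n \<Rightarrow> real^'n \<Rightarrow> (real^'n) set" where
  "bipyramid k B c d x y = convex hull (B \<union> {- (c *\<^sub>R lift1 k x), d *\<^sub>R lift1 k y})"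

definition lower_pyramid :: "'n::finite \<Rightarrow> (real^'n) set \<Rightarrow> real \<Rightarrow> real^'n \<Rightarrow> (real^'n) set" where
  "lower_pyramid k B c x = convex hull (insert (- (c *\<^sub>R lift1 k x)) B)"

definition upper_pyramid :: "'n::finite \<Rightarrow> (real^'n) set \<Rightarrow> real \<Rightarrow> real^'n \<Rightarrow> (real^'n) set" where
  "upper_pyramid k B d y = convex hull (insert (d *\<^sub>R lift1 k y) B)"

lemma pyramid_apex_component:
  assumes B: "B \<in> Po k" and z: "z \<in> convex hull (insert p B)"
  obtains s where "0 \<le> s" "s \<le> 1" "z $ k = s * p $ k" "s = 0 \<Longrightarrow> z \<in> B"
proof -
  have "B \<noteq> {}" using Po_D(2)[OF B] by blast
  then obtain s w where s: "0 \<le> s" "s \<le> 1" "w \<in> convex hull B" and zw: "z = s *\<^sub>R p + (1 - s) *\<^sub>R w"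
    using z by (rule convex_hull_insert_elim)
  have "w \<in> B" using s(3) convex_hull_eq[THEN iffD2, OF Po_D(1)[OF B]] by simp
  then have "w $ k = 0" using Po_D(3)[OF B] by auto
  then show ?thesis using s \<open>w \<in> B\<close> by (intro that[of s]) (auto simp: zw)
qed

lemma lower_pyramid_subset:
  assumes "B \<in> Po k" "c > 0" "x \<in> hplane k"
  shows "lower_pyramid k B c x \<subseteq> {z. z $ k \<le> 0}"
proof
  fix z assume "z \<in> lower_pyramid k B c x"
  then obtain s where "0 \<le> s" "z $ k = s * (- (c *\<^sub>R lift1 k x)) $ k"
    using pyramid_apex_component[OF assms(1)] unfolding lower_pyramid_def by metis
  then show "z \<in> {z. z $ k \<le> 0}" using assms(2,3) by simp
qed

lemma upper_pyramid_subset: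
  assumes "B \<in> Po k" "d > 0" "y \<in> hplane k"
  shows "upper_pyramid k B d y \<subseteq> {z. 0 \<le> z $ k}"
proof
  fix z assume "z \<in> upper_pyramid k B d y"
  then obtain s where "0 \<le> s" "z $ k = s * (d *\<^sub>R lift1 k y) $ k"
    using pyramid_apex_component[OF assms(1)] unfolding upper_pyramid_def by metis
  then show "z \<in> {z. 0 \<le> z $ k}" using assms(2,3) by simp
qed

lemma lower_pyramid_inter_hplane:
  assumes "B \<in> Po k" "c > 0" "x \<in> hplane k"
  shows "lower_pyramid k B c x \<inter> hplane k = B"
proof (intro equalityI subsetI)
  fix z assume "z \<in> lower_pyramid k B c x \<inter> hplane k"
  then obtain s where "z $ k = s * (- (c *\<^sub>R lift1 k x)) $ k" "s = 0 \<Longrightarrow> z \<in> B" "z $ k = 0"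
    using pyramid_apex_component[OF assms(1)] unfolding lower_pyramid_def by (metis IntE mem_hplane)
  then show "z \<in> B" using assms(2,3) by simp
qed (use Po_D(3)[OF assms(1)] in \<open>auto simp: lower_pyramid_def intro: hull_inc\<close>)

lemma upper_pyramid_inter_hplane:
  assumes "B \<in> Po k" "d > 0" "y \<in> hplane k"
  shows "upper_pyramid k B d y \<inter> hplane k = B"
proof (intro equalityI subsetI)
  fix z assume "z \<in> upper_pyramid k B d y \<inter> hplane k"
  then obtain s where "z $ k = s * (d *\<^sub>R lift1 k y) $ k" "s = 0 \<Longrightarrow> z \<in> B" "z $ k = 0"
    using pyramid_apex_component[OF assms(1)] unfolding upper_pyramid_def by (metis IntE mem_hplane)
  then show "z \<in> B" using assms(2,3) by simp
qed (use Po_D(3)[OF assms(1)] in \<open>auto simp: upper_pyramid_def intro: hull_inc\<close>)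

lemma segment_apexes_meet_hplane:
  assumes "c > 0" "d > 0"
  shows "(1 - c / (c + d)) *\<^sub>R (- (c *\<^sub>R lift1 k x)) + (c / (c + d)) *\<^sub>R (d *\<^sub>R lift1 k y)
         = (c * d / (c + d)) *\<^sub>R (y - x)"
proof -
  have "(1 - c / (c + d)) * c = c * d / (c + d)" using assms by (simp add: field_simps)
  then have "(1 - c / (c + d)) *\<^sub>R (- (c *\<^sub>R lift1 k x)) + (c / (c + d)) *\<^sub>R (d *\<^sub>R lift1 k y)
             = (c * d / (c + d)) *\<^sub>R (lift1 k y - lift1 k x)"
    by (simp add: scaleR_diff_right)
  then show ?thesis by (simp add: lift1_def)
qed

lemma bipyramid_eq_Un:
  assumes B: "B \<in> Po k" and cd: "c > 0" "d > 0" and p: "(c * d / (c + d)) *\<^sub>R (y - x) \<in> B"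
  shows "bipyramid k B c d x y = lower_pyramid k B c x \<union> upper_pyramid k B d y"
  unfolding bipyramid_def lower_pyramid_def upper_pyramid_def
proof (rule convex_hull_insert2_split)
  show "convex B" "B \<noteq> {}" using Po_D(1,2)[OF B] by auto
  show "0 < c / (c + d)" "c / (c + d) < 1" using cd by (auto simp: field_simps)
qed (use p segment_apexes_meet_hplane[OF cd, of k x y] in simp)

text \<open>The segment between the two apexes crosses the hyperplane at \<open>(c d / (c + d)) (y - x)\<close>, so
  a bipyramid is a double pyramid exactly when this point lies in its base.\<close>

lemma double_pyramid_iff:
  "double_pyramid k B c d x y \<longleftrightarrow>
     B \<in> Po k \<and> 0 < c \<and> 0 < d \<and> x \<in> hplane k \<and> y \<in> hplane k \<and> (c * d / (c + d)) *\<^sub>R (y - x) \<in> B"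
proof
  assume dp: "double_pyramid k B c d x y"
  then have cd: "0 < c" "0 < d" by (auto simp: double_pyramid_def)
  have "0 \<le> c / (c + d)" "c / (c + d) \<le> 1" using cd by (auto simp: field_simps)
  then have "(1 - c / (c + d)) *\<^sub>R (- (c *\<^sub>R lift1 k x)) + (c / (c + d)) *\<^sub>R (d *\<^sub>R lift1 k y)
             \<in> bipyramid k B c d x y"
    unfolding bipyramid_def by (intro convexD convex_convex_hull) (auto intro: hull_inc)
  then have "(c * d / (c + d)) *\<^sub>R (y - x) \<in> bipyramid k B c d x y \<inter> hplane k"
    using dp unfolding segment_apexes_meet_hplane[OF cd] by (auto simp: double_pyramid_def)
  with dp show "B \<in> Po k \<and> 0 < c \<and> 0 < d \<and> x \<in> hplane k \<and> y \<in> hplane k \<and>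
                (c * d / (c + d)) *\<^sub>R (y - x) \<in> B"
    by (auto simp: double_pyramid_def bipyramid_def)
next
  assume "B \<in> Po k \<and> 0 < c \<and> 0 < d \<and> x \<in> hplane k \<and> y \<in> hplane k \<and>
          (c * d / (c + d)) *\<^sub>R (y - x) \<in> B"
  then have B: "B \<in> Po k" and cd: "0 < c" "0 < d" and xy: "x \<in> hplane k" "y \<in> hplane k"
    and p: "(c * d / (c + d)) *\<^sub>R (y - x) \<in> B" by auto
  have "bipyramid k B c d x y \<inter> hplane k = B"
    using lower_pyramid_inter_hplane[OF B cd(1) xy(1)] upper_pyramid_inter_hplane[OF B cd(2) xy(2)]
    unfolding bipyramid_eq_Un[OF B cd p] by blast
  then show "double_pyramid k B c d x y"
    using B cd xy by (simp add: double_pyramid_def bipyramid_def)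
qed

lemma bipyramid_split:
  "double_pyramid k B c d x y \<Longrightarrow>
     bipyramid k B c d x y = lower_pyramid k B c x \<union> upper_pyramid k B d y"
  by (simp add: double_pyramid_iff bipyramid_eq_Un)

lemma bipyramid_in_Rn: "double_pyramid k B c d x y \<Longrightarrow> bipyramid k B c d x y \<in> Rn k"
  unfolding Rn_def bipyramid_def by blast

lemma bipyramid_in_Qn: "double_pyramid k B c d 0 0 \<Longrightarrow> bipyramid k B c d 0 0 \<in> Qn k"
  unfolding Qn_def bipyramid_def by blast

lemma double_pyramid_same_apex:
  "B \<in> Po k \<Longrightarrow> 0 < c \<Longrightarrow> 0 < d \<Longrightarrow> x \<in> hplane k \<Longrightarrow> double_pyramid k B c d x x"
  by (simp add: double_pyramid_iff Po_D(2))

lemma harmonic_mono: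
  fixes c c' d d' :: real
  assumes "0 < c" "c \<le> c'" "0 < d" "d \<le> d'"
  shows "c * d / (c + d) \<le> c' * d' / (c' + d')"
proof -
  have "c * d * c' \<le> c' * d' * c"
    using assms mult_left_mono[of d d' "c * c'"] by (simp add: algebra_simps)
  moreover have "c * d * d' \<le> c' * d' * d"
    using assms mult_left_mono[of c c' "d * d'"] by (simp add: algebra_simps)
  ultimately have "c * d * (c' + d') \<le> c' * d' * (c + d)"
    by (simp add: algebra_simps)
  then show ?thesis using assms by (simp add: divide_simps)
qed

lemma double_pyramid_origin_antimono:
  assumes "double_pyramid k B c' d' 0 v" "0 < c" "c \<le> c'" "0 < d" "d \<le> d'"
  shows "double_pyramid k B c d 0 v"
proof -
  define h K where "h = c * d / (c + d)" and "K = c' * d' / (c' + d')"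
  have B: "B \<in> Po k" and Kv: "K *\<^sub>R v \<in> B"
    using assms(1) by (auto simp: double_pyramid_iff K_def)
  have "0 < K" "0 \<le> h" "h \<le> K"
    using assms(2-5) harmonic_mono[OF assms(2-5)] by (auto simp: h_def K_def)
  then have "(h / K) *\<^sub>R (K *\<^sub>R v) \<in> B"
    by (intro convex_scaleR_mem[OF Po_D(1,2)[OF B] Kv]) auto
  then show ?thesis
    using assms \<open>0 < K\<close> by (simp add: double_pyramid_iff h_def)
qed

lemma lower_pyramid_mem:
  assumes "0 < c" "0 < r" "r *\<^sub>R t \<in> B"
  shows "- ((r * c / (c + r)) *\<^sub>R lift1 k (x - t)) \<in> lower_pyramid k B c x"
proof -
  have s: "0 \<le> r / (c + r)" "r / (c + r) \<le> 1" and s': "1 - r / (c + r) = c / (c + r)"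
    using assms by (auto simp: field_simps)
  have "(r / (c + r)) *\<^sub>R (- (c *\<^sub>R lift1 k x)) + (c / (c + r)) *\<^sub>R (r *\<^sub>R t)
      = - ((r * c / (c + r)) *\<^sub>R lift1 k (x - t))" (is "?comb = _")
    by (simp add: lift1_def algebra_simps)
  moreover have "?comb \<in> lower_pyramid k B c x"
    using convex_hull_insert_segment_mem[OF assms(3) s] unfolding lower_pyramid_def s' .
  ultimately show ?thesis by simp
qed

lemma upper_pyramid_mem:
  assumes "0 < d" "0 < r" "r *\<^sub>R t \<in> B"
  shows "(r * d / (d + r)) *\<^sub>R lift1 k (y + t) \<in> upper_pyramid k B d y"
proof -
  have s: "0 \<le> r / (d + r)" "r / (d + r) \<le> 1" and s': "1 - r / (d + r) = d / (d + r)"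
    using assms by (auto simp: field_simps)
  have "(r / (d + r)) *\<^sub>R (d *\<^sub>R lift1 k y) + (d / (d + r)) *\<^sub>R (r *\<^sub>R t)
      = (r * d / (d + r)) *\<^sub>R lift1 k (y + t)" (is "?comb = _")
    by (simp add: lift1_def algebra_simps)
  moreover have "?comb \<in> upper_pyramid k B d y"
    using convex_hull_insert_segment_mem[OF assms(3) s] unfolding upper_pyramid_def s' .
  ultimately show ?thesis by simp
qed

lemma lower_pyramid_apex_mem:
  assumes "B \<in> Po k" "0 \<le> c" "c \<le> c'"
  shows "- (c *\<^sub>R lift1 k x) \<in> lower_pyramid k B c' x"
proof (cases "c' = 0")
  case False
  have "0 \<in> lower_pyramid k B c' x"
    using Po_D(2)[OF assms(1)] by (auto simp: lower_pyramid_def intro: hull_inc)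
  then have "(c / c') *\<^sub>R (- (c' *\<^sub>R lift1 k x)) \<in> lower_pyramid k B c' x"
    using assms False unfolding lower_pyramid_def
    by (intro convex_scaleR_mem convex_convex_hull) (auto intro: hull_inc)
  then show ?thesis using False by simp
qed (use assms in \<open>auto simp: lower_pyramid_def intro: hull_inc\<close>)

lemma upper_pyramid_apex_mem:
  assumes "B \<in> Po k" "0 \<le> d" "d \<le> d'"
  shows "d *\<^sub>R lift1 k y \<in> upper_pyramid k B d' y"
proof (cases "d' = 0")
  case False
  have "0 \<in> upper_pyramid k B d' y"
    using Po_D(2)[OF assms(1)] by (auto simp: upper_pyramid_def intro: hull_inc)
  then have "(d / d') *\<^sub>R (d' *\<^sub>R lift1 k y) \<in> upper_pyramid k B d' y"
    using assms False unfolding upper_pyramid_def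
    by (intro convex_scaleR_mem[where x = "d' *\<^sub>R lift1 k y"] convex_convex_hull) (auto intro: hull_inc)
  then show ?thesis using False by simp
qed (use assms in \<open>auto simp: upper_pyramid_def intro: hull_inc\<close>)

lemma double_pyramid_origin_stretch:
  assumes dp: "double_pyramid k B c d 0 (2 *\<^sub>R u)"
  shows "double_pyramid k B (2 * c) (2 * d) 0 u"
proof -
  have "0 < c" "0 < d" using dp by (auto simp: double_pyramid_iff)
  then have eq: "(2 * c * (2 * d) / (2 * c + 2 * d)) *\<^sub>R u = (c * d / (c + d)) *\<^sub>R (2 *\<^sub>R u)"
    by (simp add: field_simps)
  have "B \<in> Po k \<and> 0 < c \<and> 0 < d \<and> 0 \<in> hplane k \<and> 2 *\<^sub>R u \<in> hplane k
      \<and> (c * d / (c + d)) *\<^sub>R (2 *\<^sub>R u) \<in> B"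
    using dp unfolding double_pyramid_iff diff_zero .
  then show ?thesis
    unfolding double_pyramid_iff diff_zero eq by simp
qed

lemma double_pyramid_shift:
  "double_pyramid k B c d x y \<Longrightarrow> z \<in> hplane k \<Longrightarrow> double_pyramid k B c d (x + z) (y + z)"
  by (simp add: double_pyramid_iff)

definition shear :: "'n::finite \<Rightarrow> real^'n \<Rightarrow> real^'n^'n" where
  "shear k z = (\<chi> i j. (if i = j then 1 else 0) + (if j = k then z $ i else 0))"

lemma shear_mult_vec: "shear k z *v v = v + (v $ k) *\<^sub>R z"
  by (simp add: vec_eq_iff shear_def matrix_vector_mult_def distrib_left sum.distrib
      if_distrib[where f = "\<lambda>a. _ * a"] mult.commute cong: if_cong)

lemma shear_0: "shear k 0 = mat 1"
  by (simp add: matrix_eq shear_mult_vec)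

lemma shear_mult: "shear k z ** shear k w = shear k (w + (1 + w $ k) *\<^sub>R z)"
  by (simp add: matrix_eq shear_mult_vec flip: matrix_vector_mul_assoc) (simp add: algebra_simps)

lemma invertible_shear:
  assumes "z $ k \<noteq> -1"
  shows "invertible (shear k z)"
proof -
  define w where "w = (- inverse (1 + z $ k)) *\<^sub>R z"
  have "1 + z $ k \<noteq> 0" using assms by linarith
  then have "w + (1 + w $ k) *\<^sub>R z = 0" "z + (1 + z $ k) *\<^sub>R w = 0"
    by (simp_all add: w_def field_simps)
  then have "shear k z ** shear k w = mat 1" "shear k w ** shear k z = mat 1"
    by (simp_all add: shear_mult shear_0)
  then show ?thesis unfolding invertible_def by blast
qed

lemma shear_mult_left: "(shear k z ** Y) $ i $ j = Y $ i $ j + z $ i * Y $ k $ j"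
  by (simp add: shear_def matrix_matrix_mult_def distrib_right sum.distrib
      if_distrib[where f = "\<lambda>a. a * _"] cong: if_cong)

lemma shear_mult_transpose_right: "(Y ** transpose (shear k z)) $ i $ j = Y $ i $ j + Y $ i $ k * z $ j"
  by (simp add: shear_def matrix_matrix_mult_def transpose_def distrib_left sum.distrib
      if_distrib[where f = "\<lambda>a. _ * a"] cong: if_cong)

lemma shear_congruence_entry:
  "(shear k z ** Y ** transpose (shear k z)) $ i $ j
     = Y $ i $ j + z $ i * Y $ k $ j + (Y $ i $ k + z $ i * Y $ k $ k) * z $ j"
  by (simp add: shear_mult_transpose_right shear_mult_left)

lemma antisym_entry:
  fixes M :: "real^'n^'n"
  assumes "transpose M = - M"
  shows "M $ i $ j = - M $ j $ i"
  using arg_cong[OF assms, of "\<lambda>A. A $ j $ i"] by (simp add: transpose_def)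

lemma antisym_shear_stretch_eq_0:
  fixes M G :: "real^'n^'n" and k :: 'n
  assumes antiM: "transpose M = - M" and antiG: "transpose G = - G"
    and u: "u $ k = 0" and \<delta>: "0 \<le> \<delta>"
    and M: "M = G + \<delta> *\<^sub>R (shear k u ** G ** transpose (shear k u))"
    and G: "G = 2 *\<^sub>R (shear k (axis k 1) ** M ** transpose (shear k (axis k 1)))"
  shows "M = 0"
proof -
  have Mkk: "M $ k $ k = 0" and Gkk: "G $ k $ k = 0"
    using antisym_entry[OF antiM, of k k] antisym_entry[OF antiG, of k k] by simp_all
  have M_entry: "M $ i $ j = (1 + \<delta>) * G $ i $ j + \<delta> * (u $ i * G $ k $ j + G $ i $ k * u $ j)" for i j
    using arg_cong[OF M, of "\<lambda>A. A $ i $ j"] Gkk by (simp add: shear_congruence_entry algebra_simps)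
  have G_entry: "G $ i $ j = 2 * (M $ i $ j + axis k 1 $ i * M $ k $ j + M $ i $ k * axis k 1 $ j)" for i j
    using arg_cong[OF G, of "\<lambda>A. A $ i $ j"] Mkk by (simp add: shear_congruence_entry)
  have M_col: "M $ i $ k = 0" for i
  proof (cases "i = k")
    case False
    have "M $ i $ k = (1 + \<delta>) * (4 * M $ i $ k)"
      using M_entry[of i k] G_entry[of i k] u Gkk Mkk False by (simp add: axis_def)
    then have "(3 + 4 * \<delta>) * M $ i $ k = 0" by (simp add: algebra_simps)
    then show ?thesis using \<delta> by simp
  qed (use Mkk in simp)
  have G_col: "G $ i $ k = 0" and G_row: "G $ k $ j = 0" for i j
    using G_entry[of i k] G_entry[of k j] M_col antisym_entry[OF antiM, of k j] Mkk
    by (simp_all add: axis_def)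
  have "M $ i $ j = 0" for i j
  proof -
    have "M $ i $ j = (1 + \<delta>) * (2 * M $ i $ j)"
      using M_entry[of i j] G_entry[of i j] G_col G_row M_col antisym_entry[OF antiM, of k j]
      by simp
    then have "(1 + 2 * \<delta>) * M $ i $ j = 0" by (simp add: algebra_simps)
    then show ?thesis using \<delta> by simp
  qed
  then show ?thesis by (simp add: vec_eq_iff)
qed

text \<open>\<open>shear k (axis k 1)\<close> is the diagonal map doubling the \<open>k\<close>-th coordinate.\<close>

lemma det_shear_axis: "det (shear k (axis k 1)) = 2"
proof -
  have "det (shear k (axis k 1)) = (\<Prod>i\<in>UNIV. shear k (axis k 1) $ i $ i)"
    by (rule det_diagonal) (auto simp: shear_def axis_def)
  also have "\<dots> = (\<Prod>i\<in>UNIV. if i = k then 2 else 1)"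
    by (rule prod.cong) (auto simp: shear_def axis_def)
  finally show ?thesis by (simp add: prod.delta)
qed

lemma linear_image_bipyramid:
  assumes "linear f" "\<And>v. v \<in> B \<Longrightarrow> f v = v"
  shows "f ` bipyramid k B c d x y = convex hull (B \<union> {f (- (c *\<^sub>R lift1 k x)), f (d *\<^sub>R lift1 k y)})"
proof -
  have "f ` (B \<union> {- (c *\<^sub>R lift1 k x), d *\<^sub>R lift1 k y}) = B \<union> {f (- (c *\<^sub>R lift1 k x)), f (d *\<^sub>R lift1 k y)}"
    using assms(2) by force
  then show ?thesis
    unfolding bipyramid_def convex_hull_linear_image[OF assms(1)] by simp
qed

lemma shear_image_bipyramid:
  assumes "B \<subseteq> hplane k" "x \<in> hplane k" "y \<in> hplane k"
  shows "(\<lambda>v. shear k z *v v) ` bipyramid k B c d x y = bipyramid k B c d (x + z) (y + z)"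
proof -
  have "(\<lambda>v. shear k z *v v) ` bipyramid k B c d x y =
        convex hull (B \<union> {shear k z *v (- (c *\<^sub>R lift1 k x)), shear k z *v (d *\<^sub>R lift1 k y)})"
    using assms(1) by (intro linear_image_bipyramid matrix_vector_mul_linear) (auto simp: shear_mult_vec)
  also have "shear k z *v (- (c *\<^sub>R lift1 k x)) = - (c *\<^sub>R lift1 k (x + z))"
    using assms(2) by (simp add: shear_mult_vec lift1_def algebra_simps)
  also have "shear k z *v (d *\<^sub>R lift1 k y) = d *\<^sub>R lift1 k (y + z)"
    using assms(3) by (simp add: shear_mult_vec lift1_def algebra_simps)
  finally show ?thesis unfolding bipyramid_def .
qed

lemma stretch_image_bipyramid:
  assumes "B \<subseteq> hplane k" "y \<in> hplane k"
  shows "(\<lambda>v. shear k (axis k 1) *v v) ` bipyramid k B c d 0 (2 *\<^sub>R y) = bipyramid k B (2 * c) (2 * d) 0 y"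
proof -
  have "(\<lambda>v. shear k (axis k 1) *v v) ` bipyramid k B c d 0 (2 *\<^sub>R y) =
        convex hull (B \<union> {shear k (axis k 1) *v (- (c *\<^sub>R lift1 k 0)),
                            shear k (axis k 1) *v (d *\<^sub>R lift1 k (2 *\<^sub>R y))})"
    using assms(1) by (intro linear_image_bipyramid matrix_vector_mul_linear) (auto simp: shear_mult_vec)
  also have "shear k (axis k 1) *v (- (c *\<^sub>R lift1 k 0)) = - ((2 * c) *\<^sub>R lift1 k 0)"
    by (simp add: shear_mult_vec lift1_def scaleR_2 algebra_simps flip: scaleR_scaleR)
  also have "shear k (axis k 1) *v (d *\<^sub>R lift1 k (2 *\<^sub>R y)) = (2 * d) *\<^sub>R lift1 k y"
    using assms(2) by (simp add: shear_mult_vec lift1_def scaleR_2 algebra_simps flip: scaleR_scaleR)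
  finally show ?thesis unfolding bipyramid_def .
qed

locale covariant_valuation =
  fixes k :: "'n::finite" and \<mu> :: "(real^'n) set \<Rightarrow> real^'n^'n"
  assumes valuation: "valuation_on (Rn k) \<mu>"
    and covariant: "GL_covariant_on (Rn k) \<mu>"
    and vanishes_Qn: "\<forall>P\<in>Qn k. \<mu> P = 0"
begin

lemma covariant_image:
  "invertible \<phi> \<Longrightarrow> P \<in> Rn k \<Longrightarrow> (\<lambda>v. \<phi> *v v) ` P \<in> Rn k \<Longrightarrow>
     \<mu> ((\<lambda>v. \<phi> *v v) ` P) = \<bar>det \<phi>\<bar> *\<^sub>R (\<phi> ** \<mu> P ** transpose \<phi>)"
  using covariant unfolding GL_covariant_on_def by blast

lemma shear_covariant_bipyramid:
  assumes dp: "double_pyramid k B c d x y" and z: "z \<in> hplane k"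
  shows "\<mu> (bipyramid k B c d (x + z) (y + z))
         = \<bar>det (shear k z)\<bar> *\<^sub>R (shear k z ** \<mu> (bipyramid k B c d x y) ** transpose (shear k z))"
proof -
  have "(\<lambda>v. shear k z *v v) ` bipyramid k B c d x y = bipyramid k B c d (x + z) (y + z)"
    using dp by (intro shear_image_bipyramid) (auto simp: double_pyramid_iff dest: Po_D(3))
  moreover have "invertible (shear k z)"
    using z by (intro invertible_shear) simp
  ultimately show ?thesis
    using covariant_image bipyramid_in_Rn[OF dp] bipyramid_in_Rn[OF double_pyramid_shift[OF dp z]]
    by metis
qed

lemma mu_bipyramid_same_apex:
  assumes "B \<in> Po k" "0 < c" "0 < d" "z \<in> hplane k"
  shows "\<mu> (bipyramid k B c d z z) = 0"
proof -
  have dp: "double_pyramid k B c d 0 0"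
    using assms by (intro double_pyramid_same_apex) simp_all
  then have "\<mu> (bipyramid k B c d 0 0) = 0"
    using vanishes_Qn bipyramid_in_Qn by blast
  then show ?thesis
    using shear_covariant_bipyramid[OF dp assms(4)] by simp
qed

text \<open>The two apex conditions make the union and the intersection of the first two bipyramids
  equal to the bipyramids obtained by exchanging their upper apexes.\<close>

lemma valuation_bipyramid_exchange:
  assumes dpK: "double_pyramid k B c d x y" and dpL: "double_pyramid k B c' d' x' y'"
    and dpU: "double_pyramid k B c d' x y'" and dpI: "double_pyramid k B c' d x' y"
    and lower: "- (c' *\<^sub>R lift1 k x') \<in> lower_pyramid k B c x"
    and upper: "d *\<^sub>R lift1 k y \<in> upper_pyramid k B d' y'"
  shows "\<mu> (bipyramid k B c d' x y') + \<mu> (bipyramid k B c' d x' y)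
         = \<mu> (bipyramid k B c d x y) + \<mu> (bipyramid k B c' d' x' y')"
proof -
  have B: "B \<in> Po k" and cd: "0 < c" "0 < d'" and xy: "x \<in> hplane k" "y' \<in> hplane k"
    using dpU by (auto simp: double_pyramid_iff)
  have lower_sub: "lower_pyramid k B c' x' \<subseteq> lower_pyramid k B c x"
    using lower unfolding lower_pyramid_def by (intro hull_minimal) (auto intro: hull_inc)
  have upper_sub: "upper_pyramid k B d y \<subseteq> upper_pyramid k B d' y'"
    using upper unfolding upper_pyramid_def by (intro hull_minimal) (auto intro: hull_inc)
  have "lower_pyramid k B c x \<inter> upper_pyramid k B d' y' \<subseteq> B"
    using lower_pyramid_subset[OF B cd(1) xy(1)] upper_pyramid_subset[OF B cd(2) xy(2)]
      lower_pyramid_inter_hplane[OF B cd(1) xy(1)] by force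
  moreover have "B \<subseteq> lower_pyramid k B c' x'"
    by (auto simp: lower_pyramid_def intro: hull_inc)
  ultimately have union: "bipyramid k B c d x y \<union> bipyramid k B c' d' x' y' = bipyramid k B c d' x y'"
    and inter: "bipyramid k B c d x y \<inter> bipyramid k B c' d' x' y' = bipyramid k B c' d x' y"
    using lower_sub upper_sub
    unfolding bipyramid_split[OF dpK] bipyramid_split[OF dpL] bipyramid_split[OF dpU]
      bipyramid_split[OF dpI] by blast+
  show ?thesis
    using valuation bipyramid_in_Rn[OF dpK] bipyramid_in_Rn[OF dpL] bipyramid_in_Rn[OF dpU]
      bipyramid_in_Rn[OF dpI]
    unfolding valuation_on_def union[symmetric] inter[symmetric] by blast
qed

lemma mu_bipyramid_origin_upper_eq:
  assumes dp: "double_pyramid k B c d 0 v" and dp': "double_pyramid k B c d' 0 v" and "d \<le> d'"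
  shows "\<mu> (bipyramid k B c d 0 v) = \<mu> (bipyramid k B c d' 0 v)"
proof -
  have B: "B \<in> Po k" and c: "0 < c" and d: "0 < d" "0 < d'" and v: "v \<in> hplane k"
    using dp dp' by (auto simp: double_pyramid_iff)
  obtain r where r: "0 < r" "r *\<^sub>R (- v) \<in> B"
    using Po_ray_meets[OF B, of "- v"] v by auto
  define c\<^sub>1 where "c\<^sub>1 = r * c / (c + r)"
  have c\<^sub>1: "0 < c\<^sub>1" using r c by (simp add: c\<^sub>1_def)
  have "- (c\<^sub>1 *\<^sub>R lift1 k v) \<in> lower_pyramid k B c 0"
    using lower_pyramid_mem[OF c r, of k 0] by (simp add: c\<^sub>1_def)
  moreover have "d *\<^sub>R lift1 k v \<in> upper_pyramid k B d' v"
    using upper_pyramid_apex_mem[OF B] d \<open>d \<le> d'\<close> by simp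
  ultimately have "\<mu> (bipyramid k B c d' 0 v) + \<mu> (bipyramid k B c\<^sub>1 d v v)
      = \<mu> (bipyramid k B c d 0 v) + \<mu> (bipyramid k B c\<^sub>1 d' v v)"
    using B c\<^sub>1 d v
    by (intro valuation_bipyramid_exchange dp dp' double_pyramid_same_apex) auto
  then show ?thesis
    using mu_bipyramid_same_apex[OF B c\<^sub>1] d v by simp
qed

lemma mu_bipyramid_origin_lower_eq:
  assumes dp: "double_pyramid k B c d 0 v" and dp': "double_pyramid k B c' d 0 v" and "c \<le> c'"
  shows "\<mu> (bipyramid k B c d 0 v) = \<mu> (bipyramid k B c' d 0 v)"
proof -
  have B: "B \<in> Po k" and c: "0 < c" "0 < c'" and d: "0 < d" and v: "v \<in> hplane k"
    using dp dp' by (auto simp: double_pyramid_iff)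
  obtain r where r: "0 < r" "r *\<^sub>R (- v) \<in> B"
    using Po_ray_meets[OF B, of "- v"] v by auto
  define d\<^sub>0 where "d\<^sub>0 = r * d / (d + r)"
  have d\<^sub>0: "0 < d\<^sub>0" using r d by (simp add: d\<^sub>0_def)
  have "- (c *\<^sub>R lift1 k 0) \<in> lower_pyramid k B c' 0"
    using lower_pyramid_apex_mem[OF B] c \<open>c \<le> c'\<close> by simp
  moreover have "d\<^sub>0 *\<^sub>R lift1 k 0 \<in> upper_pyramid k B d v"
    using upper_pyramid_mem[OF d r, of k v] by (simp add: d\<^sub>0_def)
  ultimately have "\<mu> (bipyramid k B c' d 0 v) + \<mu> (bipyramid k B c d\<^sub>0 0 0)
      = \<mu> (bipyramid k B c' d\<^sub>0 0 0) + \<mu> (bipyramid k B c d 0 v)"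
    using B c d\<^sub>0
    by (intro valuation_bipyramid_exchange dp dp' double_pyramid_same_apex) auto
  then show ?thesis
    using mu_bipyramid_same_apex[OF B _ d\<^sub>0] c by simp
qed

lemma mu_bipyramid_origin_eq:
  assumes dp: "double_pyramid k B c d 0 v" and dp': "double_pyramid k B c' d' 0 v"
    and "c \<le> c'" "d \<le> d'"
  shows "\<mu> (bipyramid k B c d 0 v) = \<mu> (bipyramid k B c' d' 0 v)"
proof -
  have "double_pyramid k B c d' 0 v"
    using dp dp' assms(3) by (intro double_pyramid_origin_antimono[OF dp']) (auto simp: double_pyramid_iff)
  then show ?thesis
    using mu_bipyramid_origin_upper_eq[OF dp _ \<open>d \<le> d'\<close>] mu_bipyramid_origin_lower_eq[OF _ dp' \<open>c \<le> c'\<close>]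
    by simp
qed

lemma mu_bipyramid_origin_decompose:
  assumes dp: "double_pyramid k B c d 0 (2 *\<^sub>R u)"
  defines "G \<equiv> \<mu> (bipyramid k B (2 * c) (2 * d) 0 u)"
  shows "\<mu> (bipyramid k B c d 0 (2 *\<^sub>R u)) = G + \<bar>det (shear k u)\<bar> *\<^sub>R (shear k u ** G ** transpose (shear k u))"
proof -
  have B: "B \<in> Po k" and c: "0 < c" and d: "0 < d" and u: "u \<in> hplane k"
    using dp by (auto simp: double_pyramid_iff)
  have dpG: "double_pyramid k B (2 * c) (2 * d) 0 u"
    using dp by (rule double_pyramid_origin_stretch)
  obtain r where r: "0 < r" "r *\<^sub>R (- u) \<in> B"
    using Po_ray_meets[OF B, of "- u"] u by auto
  define c\<^sub>1 d\<^sub>1 where "c\<^sub>1 = r * c / (c + r)" and "d\<^sub>1 = r * d / (d + r)"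
  have c\<^sub>1: "0 < c\<^sub>1" "c\<^sub>1 \<le> 2 * c" and d\<^sub>1: "0 < d\<^sub>1" "d\<^sub>1 \<le> 2 * d"
    using r c d by (auto simp: c\<^sub>1_def d\<^sub>1_def field_simps)
  have dp_d\<^sub>1: "double_pyramid k B c d\<^sub>1 0 u"
    using c d\<^sub>1 by (intro double_pyramid_origin_antimono[OF dpG]) auto
  have dp_c\<^sub>1: "double_pyramid k B c\<^sub>1 d 0 u"
    using c\<^sub>1 d by (intro double_pyramid_origin_antimono[OF dpG]) auto
  have shifted: "bipyramid k B c\<^sub>1 d (0 + u) (u + u) = bipyramid k B c\<^sub>1 d u (2 *\<^sub>R u)"
    by (simp add: scaleR_2)
  have "- (c\<^sub>1 *\<^sub>R lift1 k u) \<in> lower_pyramid k B c 0"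
    using lower_pyramid_mem[OF c r, of k 0] by (simp add: c\<^sub>1_def)
  moreover have "d\<^sub>1 *\<^sub>R lift1 k u \<in> upper_pyramid k B d (2 *\<^sub>R u)"
    using upper_pyramid_mem[OF d r, of k "2 *\<^sub>R u"] by (simp add: d\<^sub>1_def scaleR_2)
  ultimately have "\<mu> (bipyramid k B c d 0 (2 *\<^sub>R u)) + \<mu> (bipyramid k B c\<^sub>1 d\<^sub>1 u u)
      = \<mu> (bipyramid k B c d\<^sub>1 0 u) + \<mu> (bipyramid k B c\<^sub>1 d u (2 *\<^sub>R u))"
    using double_pyramid_shift[OF dp_c\<^sub>1 u] B c\<^sub>1 d\<^sub>1 u
    by (intro valuation_bipyramid_exchange dp_d\<^sub>1 dp double_pyramid_same_apex) (auto simp: scaleR_2)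
  moreover have "\<mu> (bipyramid k B c\<^sub>1 d\<^sub>1 u u) = 0"
    using mu_bipyramid_same_apex[OF B c\<^sub>1(1) d\<^sub>1(1) u] .
  moreover have "\<mu> (bipyramid k B c d\<^sub>1 0 u) = G"
    unfolding G_def using c d\<^sub>1 by (intro mu_bipyramid_origin_eq dp_d\<^sub>1 dpG) auto
  moreover have "\<mu> (bipyramid k B c\<^sub>1 d 0 u) = G"
    unfolding G_def using c\<^sub>1 d by (intro mu_bipyramid_origin_eq dp_c\<^sub>1 dpG) auto
  ultimately show ?thesis
    using shear_covariant_bipyramid[OF dp_c\<^sub>1 u] unfolding shifted by simp
qed

lemma mu_bipyramid_origin_stretch:
  assumes dp: "double_pyramid k B c d 0 (2 *\<^sub>R u)"
  shows "\<mu> (bipyramid k B (2 * c) (2 * d) 0 u)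
         = 2 *\<^sub>R (shear k (axis k 1) ** \<mu> (bipyramid k B c d 0 (2 *\<^sub>R u)) ** transpose (shear k (axis k 1)))"
proof -
  have B: "B \<in> Po k" and u: "u \<in> hplane k"
    using dp by (auto simp: double_pyramid_iff)
  have dpG: "double_pyramid k B (2 * c) (2 * d) 0 u"
    using dp by (rule double_pyramid_origin_stretch)
  have "invertible (shear k (axis k 1))"
    by (intro invertible_shear) simp
  note stretch = stretch_image_bipyramid[OF Po_D(3)[OF B] u, of c d]
  have "\<mu> ((\<lambda>v. shear k (axis k 1) *v v) ` bipyramid k B c d 0 (2 *\<^sub>R u))
      = \<bar>det (shear k (axis k 1))\<bar> *\<^sub>R
        (shear k (axis k 1) ** \<mu> (bipyramid k B c d 0 (2 *\<^sub>R u)) ** transpose (shear k (axis k 1)))"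
    by (rule covariant_image[OF \<open>invertible _\<close> bipyramid_in_Rn[OF dp]])
      (simp add: stretch bipyramid_in_Rn[OF dpG])
  then show ?thesis by (simp add: stretch det_shear_axis)
qed

lemma mu_bipyramid_origin_eq_0:
  assumes antisym: "\<forall>P\<in>Rn k. transpose (\<mu> P) = - \<mu> P"
    and dp: "double_pyramid k B c d 0 (2 *\<^sub>R u)"
  shows "\<mu> (bipyramid k B c d 0 (2 *\<^sub>R u)) = 0"
proof (rule antisym_shear_stretch_eq_0)
  show "transpose (\<mu> (bipyramid k B c d 0 (2 *\<^sub>R u))) = - \<mu> (bipyramid k B c d 0 (2 *\<^sub>R u))"
    using antisym bipyramid_in_Rn[OF dp] by blast
  show "transpose (\<mu> (bipyramid k B (2 * c) (2 * d) 0 u)) = - \<mu> (bipyramid k B (2 * c) (2 * d) 0 u)"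
    using antisym bipyramid_in_Rn[OF double_pyramid_origin_stretch[OF dp]] by blast
  show "u $ k = 0"
    using dp by (simp add: double_pyramid_iff)
qed (rule mu_bipyramid_origin_decompose[OF dp] mu_bipyramid_origin_stretch[OF dp] abs_ge_zero)+

lemma mu_vanishes_on_Rn:
  assumes antisym: "\<forall>P\<in>Rn k. transpose (\<mu> P) = - \<mu> P" and "P \<in> Rn k"
  shows "\<mu> P = 0"
proof -
  obtain B c d x y where P: "P = bipyramid k B c d x y" and dp: "double_pyramid k B c d x y"
    using \<open>P \<in> Rn k\<close> unfolding Rn_def bipyramid_def by blast
  define u where "u = (1 / 2) *\<^sub>R (y - x)"
  have x: "x \<in> hplane k" and dp0: "double_pyramid k B c d 0 (2 *\<^sub>R u)"
    using dp by (auto simp: double_pyramid_iff u_def)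
  have "P = bipyramid k B c d (0 + x) (2 *\<^sub>R u + x)"
    by (simp add: P u_def)
  then show ?thesis
    using shear_covariant_bipyramid[OF dp0 x] mu_bipyramid_origin_eq_0[OF antisym dp0] by simp
qed

end

theorem lemma3p20:
  fixes \<mu> :: "(real^'n::finite) set \<Rightarrow> real^'n^'n"
    and k :: 'n
  assumes "CARD('n) \<ge> 3"
    and "\<mu> \<in> measurable (hausdorff_borel (Rn k)) borel"
    and "valuation_on (Rn k) \<mu>"
    and "GL_covariant_on (Rn k) \<mu>"
    and "\<forall>P\<in>Qn k. \<mu> P = 0"
    and "\<forall>P\<in>Rn k. transpose (\<mu> P) = - \<mu> P"
  shows "\<forall>P\<in>Rn k. \<mu> P = 0"
proof -
  interpret covariant_valuation k \<mu>
    using assms(3-5) by unfold_locales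
  show ?thesis
    using mu_vanishes_on_Rn[OF assms(6)] by blast
qed

end
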